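(* Let $Q$ be a right Leibniz algebra which is a weak algebra of quotients of its subalgebra $L$. (1) If $I$ is a nonzero ideal of $Q$, then $I\cap L$ is a nonzero ideal of $L$. (2) If $L$ is semiprime (respectively prime), then so is $Q$.
   Context: A right Leibniz algebra satisfies $[x,[y,z]]=[[x,y],z]-[[x,z],y]$. Ideals: subspaces $I$ with $[I,A]\subseteq I$, $[A,I]\subseteq I$ in the ambient algebra $A$. A Leibniz algebra is semiprime if $[I,I]\ne\{0\}$ for every nonzero ideal $I$, and prime if $[I,J]\neq\{0\}$ for all nonzero ideals $I,J$. $Q$ is a weak algebra of quotients of $L$ if for every $0\ne q\in Q$ there exists $x\in L$ with $0\ne[q,x]\in L$ or $y\in L$ with $0\ne[y,q]\in L$. *)

theory Defs
  imports Complex_Main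
begin

text \<open>A right Leibniz algebra over a field: a vector space (scalar multiplication
  sc) with a bilinear bracket br satisfying [x,[y,z]] = [[x,y],z] - [[x,z],y].
  The algebra Q is the whole carrier type.\<close>

definition right_leibniz_algebra ::
  "('k::field \<Rightarrow> 'v::ab_group_add \<Rightarrow> 'v) \<Rightarrow> ('v \<Rightarrow> 'v \<Rightarrow> 'v) \<Rightarrow> bool" where
  "right_leibniz_algebra sc br \<longleftrightarrow>
     vector_space sc \<and>
     (\<forall>x y z. br (x + y) z = br x z + br y z) \<and>
     (\<forall>x y z. br x (y + z) = br x y + br x z) \<and>
     (\<forall>a x y. br (sc a x) y = sc a (br x y)) \<and>
     (\<forall>a x y. br x (sc a y) = sc a (br x y)) \<and>
     (\<forall>x y z. br x (br y z) = br (br x y) z - br (br x z) y)"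

definition subalgebra ::
  "('k::field \<Rightarrow> 'v::ab_group_add \<Rightarrow> 'v) \<Rightarrow> ('v \<Rightarrow> 'v \<Rightarrow> 'v) \<Rightarrow> 'v set \<Rightarrow> bool" where
  "subalgebra sc br L \<longleftrightarrow> module.subspace sc L \<and> (\<forall>x\<in>L. \<forall>y\<in>L. br x y \<in> L)"

definition ideal_of ::
  "('k::field \<Rightarrow> 'v::ab_group_add \<Rightarrow> 'v) \<Rightarrow> ('v \<Rightarrow> 'v \<Rightarrow> 'v) \<Rightarrow> 'v set \<Rightarrow> 'v set \<Rightarrow> bool" where
  "ideal_of sc br A I \<longleftrightarrow> module.subspace sc I \<and> I \<subseteq> A \<and>
     (\<forall>x\<in>I. \<forall>a\<in>A. br x a \<in> I \<and> br a x \<in> I)"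

definition bracket_space ::
  "('k::field \<Rightarrow> 'v::ab_group_add \<Rightarrow> 'v) \<Rightarrow> ('v \<Rightarrow> 'v \<Rightarrow> 'v) \<Rightarrow> 'v set \<Rightarrow> 'v set \<Rightarrow> 'v set" where
  "bracket_space sc br I J = module.span sc {br x y | x y. x \<in> I \<and> y \<in> J}"

definition semiprime_alg ::
  "('k::field \<Rightarrow> 'v::ab_group_add \<Rightarrow> 'v) \<Rightarrow> ('v \<Rightarrow> 'v \<Rightarrow> 'v) \<Rightarrow> 'v set \<Rightarrow> bool" where
  "semiprime_alg sc br A \<longleftrightarrow>
     (\<forall>I. ideal_of sc br A I \<and> I \<noteq> {0} \<longrightarrow> bracket_space sc br I I \<noteq> {0})"

definition prime_alg ::
  "('k::field \<Rightarrow> 'v::ab_group_add \<Rightarrow> 'v) \<Rightarrow> ('v \<Rightarrow> 'v \<Rightarrow> 'v) \<Rightarrow> 'v set \<Rightarrow> bool" where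
  "prime_alg sc br A \<longleftrightarrow>
     (\<forall>I J. ideal_of sc br A I \<and> I \<noteq> {0} \<and> ideal_of sc br A J \<and> J \<noteq> {0}
        \<longrightarrow> bracket_space sc br I J \<noteq> {0})"

definition weak_algebra_of_quotients ::
  "('v::zero \<Rightarrow> 'v \<Rightarrow> 'v) \<Rightarrow> 'v set \<Rightarrow> bool" where
  "weak_algebra_of_quotients br L \<longleftrightarrow>
     (\<forall>q. q \<noteq> 0 \<longrightarrow> (\<exists>x\<in>L. br q x \<noteq> 0 \<and> br q x \<in> L) \<or> (\<exists>y\<in>L. br y q \<noteq> 0 \<and> br y q \<in> L))"

end

theory Submission
  imports Defs
begin

text \<open>A nonzero element q of an ideal I of Q has, by the weak-quotient condition, a nonzero
  bracket with some element of L which lies in L; being in I as well, it shows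
  I \<inter> L \<noteq> 0. Nonzero brackets between the intersections with L are brackets between
  the ideals themselves, so semiprimeness and primeness pass from L to Q.\<close>

lemma bracket_space_eq_0_iff:
  assumes "vector_space sc"
  shows "bracket_space sc br I J = {0} \<longleftrightarrow> (\<forall>x\<in>I. \<forall>y\<in>J. br x y = 0)"
proof -
  interpret vector_space sc by fact
  let ?S = "{br x y | x y. x \<in> I \<and> y \<in> J}"
  have "span ?S = {0} \<longleftrightarrow> ?S \<subseteq> {0}"
    using span_superset[of ?S] span_minimal[of ?S "{0}"] span_zero[of ?S] by auto
  then show ?thesis
    unfolding bracket_space_def by blast
qed

lemma bracket_space_ne_0_mono:
  assumes "vector_space sc" and "bracket_space sc br I' J' \<noteq> {0}"
    and "I' \<subseteq> I" and "J' \<subseteq> J"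
  shows "bracket_space sc br I J \<noteq> {0}"
  using assms by (auto simp: bracket_space_eq_0_iff)

lemma ideal_of_inter_subalgebra:
  assumes "vector_space sc" and "ideal_of sc br UNIV I" and "subalgebra sc br L"
  shows "ideal_of sc br L (I \<inter> L)"
proof -
  interpret vector_space sc by fact
  have "subspace I" "subspace L"
    using assms(2,3) unfolding ideal_of_def subalgebra_def by simp_all
  then have "subspace (I \<inter> L)"
    by (rule subspace_inter)
  with assms(2,3) show ?thesis
    unfolding ideal_of_def subalgebra_def by blast
qed

lemma ideal_inter_ne_0_if_weak_quotients:
  assumes "vector_space sc" and "weak_algebra_of_quotients br L"
    and "ideal_of sc br UNIV I" and "I \<noteq> {0}"
  shows "I \<inter> L \<noteq> {0}"
proof -
  interpret vector_space sc by fact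
  have "0 \<in> I"
    using assms(3) subspace_0 unfolding ideal_of_def by blast
  with assms(4) obtain q where "q \<in> I" "q \<noteq> 0" by blast
  then have brackets_in_I: "br q x \<in> I" "br x q \<in> I" for x
    using assms(3) unfolding ideal_of_def by auto
  from assms(2) \<open>q \<noteq> 0\<close>
  have "(\<exists>x\<in>L. br q x \<noteq> 0 \<and> br q x \<in> L) \<or> (\<exists>y\<in>L. br y q \<noteq> 0 \<and> br y q \<in> L)"
    unfolding weak_algebra_of_quotients_def by blast
  with brackets_in_I show ?thesis by blast
qed

lemma semiprime_alg_UNIV_if_weak_quotients:
  assumes "vector_space sc" and "subalgebra sc br L" and "weak_algebra_of_quotients br L"
    and "semiprime_alg sc br L"
  shows "semiprime_alg sc br UNIV"
  unfolding semiprime_alg_def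
proof (intro allI impI)
  fix I
  assume "ideal_of sc br UNIV I \<and> I \<noteq> {0}"
  then have "ideal_of sc br L (I \<inter> L)" "I \<inter> L \<noteq> {0}"
    using ideal_of_inter_subalgebra[OF assms(1) _ assms(2)]
      ideal_inter_ne_0_if_weak_quotients[OF assms(1,3)] by simp_all
  with assms(4) have "bracket_space sc br (I \<inter> L) (I \<inter> L) \<noteq> {0}"
    unfolding semiprime_alg_def by simp
  with assms(1) show "bracket_space sc br I I \<noteq> {0}"
    by (rule bracket_space_ne_0_mono) auto
qed

lemma prime_alg_UNIV_if_weak_quotients:
  assumes "vector_space sc" and "subalgebra sc br L" and "weak_algebra_of_quotients br L"
    and "prime_alg sc br L"
  shows "prime_alg sc br UNIV"
  unfolding prime_alg_def
proof (intro allI impI)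
  fix I J
  assume "ideal_of sc br UNIV I \<and> I \<noteq> {0} \<and> ideal_of sc br UNIV J \<and> J \<noteq> {0}"
  then have "ideal_of sc br L (I \<inter> L)" "I \<inter> L \<noteq> {0}"
    and "ideal_of sc br L (J \<inter> L)" "J \<inter> L \<noteq> {0}"
    using ideal_of_inter_subalgebra[OF assms(1) _ assms(2)]
      ideal_inter_ne_0_if_weak_quotients[OF assms(1,3)] by simp_all
  with assms(4) have "bracket_space sc br (I \<inter> L) (J \<inter> L) \<noteq> {0}"
    unfolding prime_alg_def by simp
  with assms(1) show "bracket_space sc br I J \<noteq> {0}"
    by (rule bracket_space_ne_0_mono) auto
qed

theorem proposition3p6:
  fixes sc :: "'k::field \<Rightarrow> 'v::ab_group_add \<Rightarrow> 'v"
    and br :: "'v \<Rightarrow> 'v \<Rightarrow> 'v"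
    and L :: "'v set"
  assumes "right_leibniz_algebra sc br"
    and "subalgebra sc br L"
    and "weak_algebra_of_quotients br L"
  shows "(\<forall>I. ideal_of sc br UNIV I \<and> I \<noteq> {0} \<longrightarrow> ideal_of sc br L (I \<inter> L) \<and> I \<inter> L \<noteq> {0})
         \<and> (semiprime_alg sc br L \<longrightarrow> semiprime_alg sc br UNIV)
         \<and> (prime_alg sc br L \<longrightarrow> prime_alg sc br UNIV)"
proof -
  have vs: "vector_space sc"
    using assms(1) unfolding right_leibniz_algebra_def by simp
  show ?thesis
    using ideal_of_inter_subalgebra[OF vs _ assms(2)]
      ideal_inter_ne_0_if_weak_quotients[OF vs assms(3)]
      semiprime_alg_UNIV_if_weak_quotients[OF vs assms(2,3)]
      prime_alg_UNIV_if_weak_quotients[OF vs assms(2,3)]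
    by simp
qed

end
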